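(* Let $a\geq 2$ and $0\leq b<a$ be integers, and let $\mathbb{L}$ be a skew field. Let $B$ be a $b$-space of $\mathrm{PG}(a,\mathbb{L})$, let $B_1,B_2$ be subspaces of $\mathrm{PG}(a,\mathbb{L})$ of dimension at most $b-1$, and let $B_3$ be a subspace of dimension at most $b-2$ (if $b=0$, $B_3$ is the empty subspace). Then there exists an $(a-b-1)$-space $C$ of $\mathrm{PG}(a,\mathbb{L})$ that is disjoint from $B\cup B_1\cup B_2\cup B_3$ (i.e. shares no point with it).
   Context: $\mathrm{PG}(a,\mathbb{L})$ is the projective space of an $(a+1)$-dimensional vector space over $\mathbb{L}$; an $m$-space is an $(m+1)$-dimensional vector subspace, viewed as its set of points ($1$-dimensional subspaces); the empty subspace has dimension $-1$. *)

theory Defs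
  imports Main
begin

text \<open>PG(a,L) over a skew field L (type class division_ring): the underlying
(a+1)-dimensional left vector space is modelled as the functions nat => L
vanishing outside {0..a}. Scalars act on the left.\<close>

definition vecs :: "nat \<Rightarrow> (nat \<Rightarrow> 'k::division_ring) set" where
  "vecs a = {v. \<forall>i>a. v i = 0}"

definition lin_comb :: "(nat \<Rightarrow> 'k::division_ring) list \<Rightarrow> (nat \<Rightarrow> 'k) \<Rightarrow> (nat \<Rightarrow> 'k)" where
  "lin_comb vs c = (\<lambda>i. \<Sum>j<length vs. c j * (vs ! j) i)"

definition lspan :: "(nat \<Rightarrow> 'k::division_ring) list \<Rightarrow> (nat \<Rightarrow> 'k) set" where
  "lspan vs = {lin_comb vs c | c. True}"

definition lin_indep :: "(nat \<Rightarrow> 'k::division_ring) list \<Rightarrow> bool" where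
  "lin_indep vs \<longleftrightarrow> (\<forall>c. lin_comb vs c = (\<lambda>i. 0) \<longrightarrow> (\<forall>j<length vs. c j = 0))"

text \<open>U is an m-space of PG(a,L) (projective dimension m, m >= -1): a vector
subspace of the ambient space with a basis of m+1 vectors. The empty subspace
is the zero vector subspace, of dimension -1.\<close>

definition pg_space :: "nat \<Rightarrow> int \<Rightarrow> (nat \<Rightarrow> 'k::division_ring) set \<Rightarrow> bool" where
  "pg_space a m U \<longleftrightarrow> m \<ge> -1 \<and>
     (\<exists>vs. length vs = nat (m + 1) \<and> set vs \<subseteq> vecs a \<and> lin_indep vs \<and> U = lspan vs)"

definition is_pg_subspace :: "nat \<Rightarrow> (nat \<Rightarrow> 'k::division_ring) set \<Rightarrow> bool" where
  "is_pg_subspace a U \<longleftrightarrow> (\<exists>m. pg_space a m U)"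

definition pg_points :: "nat \<Rightarrow> (nat \<Rightarrow> 'k::division_ring) set \<Rightarrow> (nat \<Rightarrow> 'k) set set" where
  "pg_points a U = {P. pg_space a 0 P \<and> P \<subseteq> U}"

end

theory Submission
  imports Defs
begin

text \<open>C is spanned by a - b vectors chosen one at a time: each new vector must lie outside
the spans of the vectors already chosen together with B, B1, B2 and B3, which are subspaces of
codimension at least 1, 2, 2 and 3 of the (a+1)-dimensional vector space. Four subspaces H, P,
Q, D of these codimensions never cover the space, even over the field with two elements: a
vector x outside H and D either works or lies in, say, P; then a vector y outside P, outside
x + Q and outside x + D exists by the same argument for three subspaces, and one of y and
y + x works.\<close>

section \<open>Spans of lists of vectors\<close>

lemma lin_comb_Cons: "lin_comb (w # ws) c = (\<lambda>i. c 0 * w i + lin_comb ws (\<lambda>j. c (Suc j)) i)"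
  unfolding lin_comb_def by (simp add: sum.lessThan_Suc_shift del: sum.lessThan_Suc)

lemma lspan_Nil: "lspan [] = {\<lambda>i. 0}"
  unfolding lspan_def lin_comb_def by simp

lemma lspan_Cons: "x \<in> lspan (w # ws) \<longleftrightarrow> (\<exists>t y. y \<in> lspan ws \<and> x = (\<lambda>i. t * w i + y i))"
proof
  assume "x \<in> lspan (w # ws)"
  then obtain c where "x = lin_comb (w # ws) c" unfolding lspan_def by blast
  then show "\<exists>t y. y \<in> lspan ws \<and> x = (\<lambda>i. t * w i + y i)"
    unfolding lin_comb_Cons lspan_def by blast
next
  assume "\<exists>t y. y \<in> lspan ws \<and> x = (\<lambda>i. t * w i + y i)"
  then obtain t d where "x = (\<lambda>i. t * w i + lin_comb ws d i)" unfolding lspan_def by blast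
  then have "x = lin_comb (w # ws) (case_nat t d)" unfolding lin_comb_Cons by simp
  then show "x \<in> lspan (w # ws)" unfolding lspan_def by blast
qed

lemma lspan_zero: "(\<lambda>i. 0) \<in> lspan ws"
  by (induction ws) (auto simp: lspan_Nil lspan_Cons intro!: exI[of _ 0])

lemma lspan_add: "x \<in> lspan ws \<Longrightarrow> y \<in> lspan ws \<Longrightarrow> (\<lambda>i. x i + y i) \<in> lspan ws"
proof (induction ws arbitrary: x y)
  case Nil
  then show ?case by (simp add: lspan_Nil)
next
  case (Cons w ws)
  from Cons.prems obtain t1 y1 t2 y2 where "y1 \<in> lspan ws" "x = (\<lambda>i. t1 * w i + y1 i)"
    "y2 \<in> lspan ws" "y = (\<lambda>i. t2 * w i + y2 i)" by (auto simp: lspan_Cons)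
  moreover have "(\<lambda>i. (t1 * w i + y1 i) + (t2 * w i + y2 i)) = (\<lambda>i. (t1 + t2) * w i + (y1 i + y2 i))"
    by (simp add: fun_eq_iff algebra_simps)
  ultimately show ?case using Cons.IH by (auto simp: lspan_Cons)
qed

lemma lspan_mult: "x \<in> lspan ws \<Longrightarrow> (\<lambda>i. s * x i) \<in> lspan ws"
proof (induction ws arbitrary: x)
  case Nil
  then show ?case by (simp add: lspan_Nil)
next
  case (Cons w ws)
  from Cons.prems obtain t y where "y \<in> lspan ws" "x = (\<lambda>i. t * w i + y i)"
    by (auto simp: lspan_Cons)
  moreover have "(\<lambda>i. s * (t * w i + y i)) = (\<lambda>i. (s * t) * w i + s * y i)"
    by (simp add: fun_eq_iff algebra_simps)
  ultimately show ?case using Cons.IH by (auto simp: lspan_Cons)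
qed

lemma lspan_diff: "x \<in> lspan ws \<Longrightarrow> y \<in> lspan ws \<Longrightarrow> (\<lambda>i. x i - y i) \<in> lspan ws"
  using lspan_add[OF _ lspan_mult, of x ws y "-1"] by simp

lemma lspan_add_eq: "x \<in> lspan ws \<Longrightarrow> (\<lambda>i. x i + y i) \<in> lspan ws \<longleftrightarrow> y \<in> lspan ws"
  using lspan_add[of x ws y] lspan_diff[of "\<lambda>i. x i + y i" ws x] by auto

lemma lspan_add_eq2: "y \<in> lspan ws \<Longrightarrow> (\<lambda>i. x i + y i) \<in> lspan ws \<longleftrightarrow> x \<in> lspan ws"
  using lspan_add[of x ws y] lspan_diff[of "\<lambda>i. x i + y i" ws y] by auto

lemma lspan_cancel_mult:
  assumes "(\<lambda>i. t * x i + w i) \<in> lspan vs" "t \<noteq> 0" "w \<in> lspan vs"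
  shows "x \<in> lspan vs"
proof -
  have "(\<lambda>i. inverse t * (t * x i + w i) + (- inverse t) * w i) \<in> lspan vs"
    by (intro lspan_add lspan_mult assms(1,3))
  then show ?thesis
    using assms(2) by (simp add: algebra_simps mult.assoc[symmetric])
qed

lemma lspan_base: "w \<in> set ws \<Longrightarrow> w \<in> lspan ws"
proof (induction ws)
  case Nil
  then show ?case by simp
next
  case (Cons u us)
  have "w = (\<lambda>i. (if w = u then 1 else 0) * u i + (if w = u then 0 else w i))"
    by auto
  moreover have "(\<lambda>i. if w = u then 0 else w i) \<in> lspan us"
    using Cons lspan_zero by (cases "w = u") auto
  ultimately show ?case unfolding lspan_Cons by blast
qed

lemma lspan_minimal: "set ws \<subseteq> lspan vs \<Longrightarrow> lspan ws \<subseteq> lspan vs"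
proof (induction ws)
  case Nil
  then show ?case by (simp add: lspan_Nil lspan_zero)
next
  case (Cons w ws)
  show ?case
  proof
    fix x assume "x \<in> lspan (w # ws)"
    then obtain t y where "y \<in> lspan ws" "x = (\<lambda>i. t * w i + y i)" by (auto simp: lspan_Cons)
    moreover have "y \<in> lspan vs" using Cons calculation by auto
    moreover have "(\<lambda>i. t * w i) \<in> lspan vs" using Cons.prems by (intro lspan_mult) auto
    ultimately show "x \<in> lspan vs" using lspan_add by blast
  qed
qed

lemma lspan_mono: "set ws \<subseteq> set vs \<Longrightarrow> lspan ws \<subseteq> lspan vs"
  by (meson lspan_base lspan_minimal subset_iff)

lemma lspan_set_eq: "set ws = set vs \<Longrightarrow> lspan ws = lspan vs"
  by (simp add: lspan_mono subset_antisym)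

lemma lspan_eqI: "set ws \<subseteq> lspan vs \<Longrightarrow> set vs \<subseteq> lspan ws \<Longrightarrow> lspan ws = lspan vs"
  by (simp add: lspan_minimal subset_antisym)

lemma lspan_Cons_cong: "lspan vs = lspan vs' \<Longrightarrow> lspan (w # vs) = lspan (w # vs')"
  by (simp add: set_eq_iff lspan_Cons)

lemma lspan_append_left: "lspan ws \<subseteq> lspan (ws @ vs)"
  and lspan_append_right: "lspan vs \<subseteq> lspan (ws @ vs)"
  and lspan_subset_Cons: "lspan ws \<subseteq> lspan (w # ws)"
  by (auto intro!: lspan_mono)

lemma lin_indep_Nil: "lin_indep []"
  by (simp add: lin_indep_def)

lemma lin_indep_Cons: "lin_indep (w # ws) \<longleftrightarrow> lin_indep ws \<and> w \<notin> lspan ws"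
proof
  assume indep: "lin_indep (w # ws)"
  show "lin_indep ws \<and> w \<notin> lspan ws"
  proof
    show "lin_indep ws" unfolding lin_indep_def
    proof (intro allI impI)
      fix d j assume d: "lin_comb ws d = (\<lambda>i. 0)" and j: "j < length ws"
      have "lin_comb (w # ws) (case_nat 0 d) = (\<lambda>i. 0)"
        using d unfolding lin_comb_Cons by (simp add: fun_eq_iff)
      then have "case_nat 0 d (Suc j) = 0"
        using indep j unfolding lin_indep_def by (metis Suc_less_eq length_Cons)
      then show "d j = 0" by simp
    qed
    show "w \<notin> lspan ws"
    proof
      assume "w \<in> lspan ws"
      then obtain d where d: "w = lin_comb ws d" unfolding lspan_def by blast
      have "lin_comb (w # ws) (case_nat (-1) d) = (\<lambda>i. 0)"
        unfolding lin_comb_Cons using d by (simp add: fun_eq_iff)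
      then have "case_nat (-1) d 0 = (0::'a)" using indep unfolding lin_indep_def by fastforce
      then show False by simp
    qed
  qed
next
  assume indep: "lin_indep ws \<and> w \<notin> lspan ws"
  show "lin_indep (w # ws)" unfolding lin_indep_def
  proof (intro allI impI)
    fix c j assume c: "lin_comb (w # ws) c = (\<lambda>i. 0)" and j: "j < length (w # ws)"
    have eq: "(\<lambda>i. c 0 * w i + lin_comb ws (\<lambda>j. c (Suc j)) i) = (\<lambda>i. 0)"
      using c unfolding lin_comb_Cons .
    have c0: "c 0 = 0"
    proof (rule ccontr)
      assume "c 0 \<noteq> 0"
      moreover have "lin_comb ws (\<lambda>j. c (Suc j)) \<in> lspan ws" unfolding lspan_def by blast
      ultimately have "w \<in> lspan ws" using lspan_cancel_mult eq lspan_zero by metis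
      then show False using indep by blast
    qed
    then have "lin_comb ws (\<lambda>j. c (Suc j)) = (\<lambda>i. 0)" using eq by simp
    then have "\<forall>k<length ws. c (Suc k) = 0" using indep unfolding lin_indep_def by blast
    then show "c j = 0" using c0 j by (cases j) auto
  qed
qed

section \<open>The Steinitz exchange lemma\<close>

lemma lspan_Cons_exchange:
  assumes "y \<in> lspan (x # ys)" "y \<notin> lspan ys"
  shows "x \<in> lspan (y # ys)"
proof -
  obtain t w where tw: "w \<in> lspan ys" "y = (\<lambda>i. t * x i + w i)"
    using assms(1) by (auto simp: lspan_Cons)
  then have "t \<noteq> 0" using assms(2) by auto
  moreover have "y \<in> lspan (y # ys)" "w \<in> lspan (y # ys)"
    using tw(1) lspan_subset_Cons by (auto simp: lspan_base)
  ultimately show ?thesis using lspan_cancel_mult tw(2) by blast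
qed

lemma lspan_Cons_Cons_add_mult: "lspan (x # (\<lambda>i. s * x i + z i) # vs) = lspan (x # z # vs)"
proof (rule lspan_eqI)
  have "x \<in> lspan (x # z # vs)" "z \<in> lspan (x # z # vs)" by (simp_all add: lspan_base)
  then have "(\<lambda>i. s * x i + z i) \<in> lspan (x # z # vs)" by (intro lspan_add lspan_mult)
  then show "set (x # (\<lambda>i. s * x i + z i) # vs) \<subseteq> lspan (x # z # vs)"
    by (auto intro: lspan_base)
next
  let ?y = "\<lambda>i. s * x i + z i"
  have "x \<in> lspan (x # ?y # vs)" "?y \<in> lspan (x # ?y # vs)" by (simp_all add: lspan_base)
  then have "(\<lambda>i. ?y i - s * x i) \<in> lspan (x # ?y # vs)" by (intro lspan_diff lspan_mult)
  then show "set (x # z # vs) \<subseteq> lspan (x # ?y # vs)"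
    by (auto intro: lspan_base)
qed

lemma lspan_exchange:
  assumes "x \<in> lspan ws" "x \<noteq> (\<lambda>i. 0)"
  shows "\<exists>w\<in>set ws. w \<in> lspan (x # remove1 w ws)"
  using assms
proof (induction ws)
  case Nil
  then show ?case by (simp add: lspan_Nil)
next
  case (Cons u us)
  show ?case
  proof (cases "x \<in> lspan us")
    case False
    with Cons.prems(1) have "u \<in> lspan (x # us)" by (rule lspan_Cons_exchange)
    then show ?thesis by simp
  next
    case True
    then obtain w where w: "w \<in> set us" "w \<in> lspan (x # remove1 w us)" using Cons by blast
    have "set (x # remove1 w us) \<subseteq> set (x # remove1 w (u # us))"
      using set_remove1_subset[of w us] by auto
    then have "w \<in> lspan (x # remove1 w (u # us))" using w(2) lspan_mono by blast
    then show ?thesis using w(1) by (metis list.set_intros(2))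
  qed
qed

lemma lin_indep_project:
  assumes "lin_indep ys" "x \<notin> lspan ys" "set ys \<subseteq> lspan (x # ws)"
  shows "\<exists>zs. length zs = length ys \<and> lin_indep zs \<and> set zs \<subseteq> lspan ws \<and>
    lspan (x # zs) = lspan (x # ys)"
  using assms
proof (induction ys)
  case Nil
  then show ?case by (intro exI[of _ "[]"]) (simp add: lin_indep_Nil)
next
  case (Cons y ys)
  have indep: "lin_indep ys" "y \<notin> lspan ys" using Cons.prems(1) by (auto simp: lin_indep_Cons)
  have "x \<notin> lspan ys" using Cons.prems(2) lspan_subset_Cons by auto
  then obtain zs where zs: "length zs = length ys" "lin_indep zs" "set zs \<subseteq> lspan ws"
    "lspan (x # zs) = lspan (x # ys)" using Cons indep by auto
  have "y \<in> lspan (x # ws)" using Cons.prems(3) by auto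
  then obtain s z where sz: "z \<in> lspan ws" "y = (\<lambda>i. s * x i + z i)" by (auto simp: lspan_Cons)
  have "z \<notin> lspan zs"
  proof
    assume "z \<in> lspan zs"
    then have "y \<in> lspan (x # zs)" using sz(2) unfolding lspan_Cons by blast
    then have "y \<in> lspan (x # ys)" using zs(4) by simp
    then have "x \<in> lspan (y # ys)" using indep(2) by (rule lspan_Cons_exchange)
    then show False using Cons.prems(2) by simp
  qed
  moreover have "lspan (x # z # zs) = lspan (x # y # ys)"
  proof -
    have "lspan (x # z # zs) = lspan (z # x # zs)" by (rule lspan_set_eq) auto
    also have "\<dots> = lspan (z # x # ys)" using zs(4) by (rule lspan_Cons_cong)
    also have "\<dots> = lspan (x # z # ys)" by (rule lspan_set_eq) auto
    also have "\<dots> = lspan (x # y # ys)" unfolding sz(2) by (rule lspan_Cons_Cons_add_mult[symmetric])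
    finally show ?thesis .
  qed
  ultimately show ?case
    using zs sz(1) by (intro exI[of _ "z # zs"]) (auto simp: lin_indep_Cons)
qed

lemma lin_indep_length_le:
  assumes "lin_indep xs" "set xs \<subseteq> lspan ws"
  shows "length xs \<le> length ws"
  using assms
proof (induction "length xs" arbitrary: xs ws)
  case 0
  then show ?case by simp
next
  case (Suc n xs')
  then obtain x xs where xs': "xs' = x # xs" by (cases xs') auto
  note prems = Suc.prems[unfolded xs']
  have indep: "lin_indep xs" "x \<notin> lspan xs" using prems(1) by (auto simp: lin_indep_Cons)
  then have "x \<noteq> (\<lambda>i. 0)" using lspan_zero by metis
  then obtain w where w: "w \<in> set ws" "w \<in> lspan (x # remove1 w ws)"
    using lspan_exchange[of x ws] prems(2) by auto
  have "set ws \<subseteq> lspan (x # remove1 w ws)"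
  proof
    fix u assume "u \<in> set ws"
    then show "u \<in> lspan (x # remove1 w ws)"
      using w(2) by (cases "u = w") (auto intro: lspan_base)
  qed
  then have "set xs \<subseteq> lspan (x # remove1 w ws)"
    using lspan_minimal prems(2) by fastforce
  then obtain zs where "length zs = length xs" "lin_indep zs" "set zs \<subseteq> lspan (remove1 w ws)"
    using lin_indep_project[OF indep] by blast
  then have "length xs \<le> length (remove1 w ws)" using Suc.hyps(1)[of zs] Suc.hyps(2) xs' by simp
  moreover have "length ws > 0" using w(1) by (rule length_pos_if_in_set)
  ultimately show ?case using xs' w(1) by (simp add: length_remove1 del: length_greater_0_conv)
qed

section \<open>Vectors avoiding several subspaces\<close>

definition unit_vec :: "nat \<Rightarrow> nat \<Rightarrow> 'k::division_ring" where
  "unit_vec j = (\<lambda>i. if i = j then 1 else 0)"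

lemma lin_indep_unit_vecs: "lin_indep (map unit_vec [0..<n] :: (nat \<Rightarrow> 'k::division_ring) list)"
  unfolding lin_indep_def
proof (intro allI impI)
  fix c :: "nat \<Rightarrow> 'k" and j
  assume c: "lin_comb (map unit_vec [0..<n]) c = (\<lambda>i. 0)"
    and j: "j < length (map unit_vec [0..<n] :: (nat \<Rightarrow> 'k) list)"
  have "lin_comb (map unit_vec [0..<n]) c j = (\<Sum>k<n. c k * (if j = k then 1 else 0))"
    unfolding lin_comb_def unit_vec_def by simp
  also have "\<dots> = c j" using j by (simp add: if_distrib cong: if_cong)
  finally show "c j = 0" using c by simp
qed

lemma exists_notin_lspan:
  assumes "length ws \<le> a"
  shows "\<exists>v\<in>vecs a. v \<notin> lspan (ws :: (nat \<Rightarrow> 'k::division_ring) list)"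
proof (rule ccontr)
  assume "\<not> ?thesis"
  moreover have "set (map unit_vec [0..<Suc a] :: (nat \<Rightarrow> 'k) list) \<subseteq> vecs a"
    by (auto simp: vecs_def unit_vec_def)
  ultimately have "length (map unit_vec [0..<Suc a] :: (nat \<Rightarrow> 'k) list) \<le> length ws"
    using lin_indep_length_le[OF lin_indep_unit_vecs] by blast
  then show False using assms by simp
qed

lemma vecs_add: "x \<in> vecs a \<Longrightarrow> y \<in> vecs a \<Longrightarrow> (\<lambda>i. x i + y i) \<in> vecs a"
  by (simp add: vecs_def)

lemma exists_notin_two_lspans:
  assumes "length s \<le> a" "length t \<le> a"
  shows "\<exists>v\<in>vecs a. v \<notin> lspan s \<and> v \<notin> lspan (t :: (nat \<Rightarrow> 'k::division_ring) list)"
proof -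
  obtain x where x: "x \<in> vecs a" "x \<notin> lspan s" using exists_notin_lspan[OF assms(1)] by blast
  obtain y where y: "y \<in> vecs a" "y \<notin> lspan t" using exists_notin_lspan[OF assms(2)] by blast
  consider "x \<notin> lspan t" | "y \<notin> lspan s" | "x \<in> lspan t" "y \<in> lspan s" by blast
  then show ?thesis
  proof cases
    case 3
    then have "(\<lambda>i. x i + y i) \<notin> lspan s" "(\<lambda>i. x i + y i) \<notin> lspan t"
      using x(2) y(2) lspan_add_eq lspan_add_eq2 by blast+
    then show ?thesis using vecs_add x(1) y(1) by blast
  qed (use x y in blast)+
qed

text \<open>If R lies in h, then R + P avoids h because P does not, and it avoids the other three
spans because R does and P lies in each of them.\<close>

lemma exists_notin_four_lspans_by_sum:
  assumes "P \<in> vecs a" "R \<in> vecs a" "P \<notin> lspan h" "P \<in> lspan p" "R \<notin> lspan p"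
    "R \<notin> lspan (P # q)" "R \<notin> lspan (P # d)"
  shows "\<exists>v\<in>vecs a. \<forall>u\<in>{h, p, q, d}. v \<notin> lspan u"
proof (cases "R \<in> lspan h")
  case False
  then show ?thesis using assms lspan_subset_Cons by blast
next
  case True
  have "P \<in> lspan (P # q)" "P \<in> lspan (P # d)" by (auto intro: lspan_base)
  then have "\<forall>u\<in>{h, p, q, d}. (\<lambda>i. R i + P i) \<notin> lspan u"
    using True assms(3-7) lspan_subset_Cons lspan_add_eq lspan_add_eq2 by blast
  then show ?thesis using vecs_add assms(1,2) by blast
qed

lemma exists_notin_three_lspans:
  assumes "length h \<le> a" "length p < a" "length d < a"
  shows "\<exists>v\<in>vecs a. \<forall>u\<in>{h, p, d :: (nat \<Rightarrow> 'k::division_ring) list}. v \<notin> lspan u"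
proof -
  obtain P where P: "P \<in> vecs a" "P \<notin> lspan h" "P \<notin> lspan d"
    using exists_notin_two_lspans[OF assms(1), of d] assms by auto
  show ?thesis
  proof (cases "P \<in> lspan p")
    case False
    then show ?thesis using P by blast
  next
    case True
    obtain R where R: "R \<in> vecs a" "R \<notin> lspan p" "R \<notin> lspan (P # d)"
      using exists_notin_two_lspans[of p a "P # d"] assms by auto
    then have "R \<notin> lspan [P]" using lspan_mono[of "[P]" "P # d"] by auto
    then show ?thesis
      using exists_notin_four_lspans_by_sum[OF P(1) R(1) P(2) True R(2) _ R(3), of "[]"] by blast
  qed
qed

lemma exists_notin_four_lspans:
  assumes "length h \<le> a" "length p < a" "length q < a" "length d + 2 \<le> a"
  shows "\<exists>v\<in>vecs a. \<forall>u\<in>{h, p, q, d :: (nat \<Rightarrow> 'k::division_ring) list}. v \<notin> lspan u"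
proof -
  obtain P where P: "P \<in> vecs a" "P \<notin> lspan h" "P \<notin> lspan d"
    using exists_notin_two_lspans[OF assms(1), of d] assms by auto
  have in_one: "\<exists>v\<in>vecs a. \<forall>u\<in>{h, p', q', d}. v \<notin> lspan u"
    if lengths: "length p' < a" "length q' < a" and P_in: "P \<in> lspan p'" for p' q'
  proof -
    obtain R where "R \<in> vecs a" "\<forall>u\<in>{P # q', p', P # d}. R \<notin> lspan u"
      using exists_notin_three_lspans[of "P # q'" a p' "P # d"] assms lengths by auto
    then show ?thesis using exists_notin_four_lspans_by_sum[OF P(1) _ P(2) P_in] by blast
  qed
  consider "P \<in> lspan p" | "P \<in> lspan q" | "P \<notin> lspan p" "P \<notin> lspan q" by blast
  then show ?thesis
  proof cases
    case 1
    then show ?thesis using in_one[of p q] assms by blast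
  next
    case 2
    then show ?thesis using in_one[of q p] assms by blast
  qed (use P in blast)
qed

section \<open>Greedy construction of the complementary space\<close>

definition meet_trivially :: "(nat \<Rightarrow> 'k::division_ring) list \<Rightarrow> (nat \<Rightarrow> 'k) list \<Rightarrow> bool" where
  "meet_trivially c u \<longleftrightarrow> lspan c \<inter> lspan u \<subseteq> {\<lambda>i. 0}"

lemma meet_trivially_Nil: "meet_trivially [] u"
  by (simp add: meet_trivially_def lspan_Nil)

lemma meet_trivially_Cons:
  assumes "meet_trivially c u" "v \<notin> lspan (c @ u)"
  shows "meet_trivially (v # c) u"
  unfolding meet_trivially_def
proof
  fix x assume "x \<in> lspan (v # c) \<inter> lspan u"
  then obtain t y where ty: "y \<in> lspan c" "x = (\<lambda>i. t * v i + y i)" "x \<in> lspan u"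
    by (auto simp: lspan_Cons)
  show "x \<in> {\<lambda>i. 0}"
  proof (cases "t = 0")
    case False
    then have "v \<in> lspan (c @ u)"
      using lspan_cancel_mult ty lspan_append_left lspan_append_right by blast
    then show ?thesis using assms(2) by blast
  next
    case True
    then show ?thesis using ty assms(1) unfolding meet_trivially_def by auto
  qed
qed

lemma exists_lin_indep_meeting_trivially:
  assumes "length u0 = Suc b" "length u1 \<le> b" "length u2 \<le> b" "length u3 < b \<or> u3 = []"
    and "j + b \<le> a"
  shows "\<exists>c. length c = j \<and> set c \<subseteq> vecs a \<and> lin_indep c \<and>
    (\<forall>u\<in>{u0, u1, u2, u3 :: (nat \<Rightarrow> 'k::division_ring) list}. meet_trivially c u)"
  using assms(5)
proof (induction j)
  case 0
  show ?case by (intro exI[of _ "[]"]) (simp add: lin_indep_Nil meet_trivially_Nil)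
next
  case (Suc j)
  then obtain c where c: "length c = j" "set c \<subseteq> vecs a" "lin_indep c"
    "\<forall>u\<in>{u0, u1, u2, u3}. meet_trivially c u" by auto
  have "\<exists>v\<in>vecs a. \<forall>u\<in>{c @ u0, c @ u1, c @ u2, c @ u3}. v \<notin> lspan u"
  proof (cases "length u3 < b")
    case True
    then show ?thesis
      using Suc.prems assms(1-3) c(1) by (intro exists_notin_four_lspans) auto
  next
    case False
    then have "u1 = []" "u2 = []" "u3 = []" using assms(2-4) by auto
    moreover obtain v where "v \<in> vecs a" "v \<notin> lspan (c @ u0)"
      using exists_notin_lspan[of "c @ u0" a] Suc.prems assms(1) c(1) by auto
    ultimately show ?thesis using lspan_append_left by fastforce
  qed
  then obtain v where v: "v \<in> vecs a" "\<forall>u\<in>{u0, u1, u2, u3}. v \<notin> lspan (c @ u)"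
    by auto
  then have "lin_indep (v # c)" using c(3) lspan_append_left by (auto simp: lin_indep_Cons)
  then show ?case using c v meet_trivially_Cons by (intro exI[of _ "v # c"]) auto
qed

lemma pg_space_lspan:
  "set c \<subseteq> vecs a \<Longrightarrow> lin_indep c \<Longrightarrow> pg_space a (int (length c) - 1) (lspan c)"
  unfolding pg_space_def by auto

lemma pg_points_disjoint:
  assumes "meet_trivially c u"
  shows "pg_points a (lspan c) \<inter> pg_points a (lspan u) = {}"
proof (rule ccontr)
  assume "\<not> ?thesis"
  then obtain P where P: "pg_space a 0 P" "P \<subseteq> lspan c" "P \<subseteq> lspan u"
    unfolding pg_points_def by blast
  then obtain p where p: "lin_indep [p]" "P = lspan [p]"
    unfolding pg_space_def by (auto simp: length_Suc_conv)
  then have "p \<noteq> (\<lambda>i. 0)" "p \<in> P" by (auto simp: lin_indep_Cons lspan_Nil lspan_base)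
  then show False using P assms unfolding meet_trivially_def by blast
qed

theorem lemma3p1:
  fixes a b :: nat and m1 m2 m3 :: int
    and B B1 B2 B3 :: "(nat \<Rightarrow> 'k::division_ring) set"
  assumes "a \<ge> 2" and "b < a"
    and "pg_space a (int b) B"
    and "pg_space a m1 B1" and "m1 \<le> int b - 1"
    and "pg_space a m2 B2" and "m2 \<le> int b - 1"
    and "pg_space a m3 B3" and "m3 \<le> max (int b - 2) (-1)"
  shows "\<exists>C. pg_space a (int a - int b - 1) C \<and>
    pg_points a C \<inter> (pg_points a B \<union> pg_points a B1 \<union> pg_points a B2 \<union> pg_points a B3) = {}"
proof -
  obtain u0 u1 u2 u3 :: "(nat \<Rightarrow> 'k) list" where
    "length u0 = Suc b" "length u1 = nat (m1 + 1)" "length u2 = nat (m2 + 1)"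
    "length u3 = nat (m3 + 1)" and B: "B = lspan u0" "B1 = lspan u1" "B2 = lspan u2" "B3 = lspan u3"
    using assms(3,4,6,8) unfolding pg_space_def Suc_as_int by blast
  then have "length u1 \<le> b" "length u2 \<le> b" "length u3 < b \<or> u3 = []"
    using assms(5,7,9) by (auto simp: max_def split: if_splits)
  then obtain c where c: "length c = a - b" "set c \<subseteq> vecs a" "lin_indep c"
    "\<forall>u\<in>{u0, u1, u2, u3}. meet_trivially c u"
    using exists_lin_indep_meeting_trivially[of u0 b u1 u2 u3 "a - b" a] \<open>length u0 = Suc b\<close> assms(2)
    by auto
  have "pg_space a (int a - int b - 1) (lspan c)"
    using pg_space_lspan[OF c(2,3)] c(1) assms(2) by (simp add: of_nat_diff)
  then show ?thesis
    using c(4) pg_points_disjoint unfolding B by blast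
qed

end
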